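(* For the SVIQS system, if $R_0>1$ then the disease is uniformly persistent: there exists a constant $\varepsilon>0$ such that every solution whose initial data satisfy $S_k(0),V_k(0),I_k(0),Q_k(0)\ge0$, $S_k(0)+V_k(0)+I_k(0)+Q_k(0)=N_k^*$ for all $k$, and $I(0)=\sum_{k=1}^np(k)I_k(0)>0$, satisfies $\liminf_{t\to\infty}I(t)\ge\varepsilon$, where $I(t)=\sum_{k=1}^np(k)I_k(t)$.
   Context: Fix an integer $n\ge1$ and numbers $p(1),\dots,p(n)>0$ with $\sum_{k=1}^n p(k)=1$; set $\langle k\rangle=\sum_{k=1}^n kp(k)$. Fix constants $b>d>0$ and let $\Phi^*>0$ satisfy $\Phi^*=\frac{1}{\langle k\rangle}\sum_{i=1}^n \frac{i\,p(i)\,b\Phi^*}{d+bi\Phi^*}$. For $k=1,\dots,n$ put $N_k^*=\frac{bk\Phi^*}{d+bk\Phi^*}\in(0,1)$ and $\Lambda_k=bk(1-N_k^* )\Phi^*$ (so $\Lambda_k=dN_k^*>0$). Parameters: $\lambda(k)>0$, $\varphi(k)>0$, $\mu_k>0$ for $k=1,\dots,n$; constants $\beta,\gamma,\eta,\omega>0$ and $\delta\in[0,1]$. For functions $I_1(t),\dots,I_n(t)$ set $\Theta(t)=\frac{1}{\langle k\rangle}\sum_{i=1}^n\varphi(i)p(i)I_i(t)$. The SVIQS system is, for $k=1,\dots,n$: $S_k'=\Lambda_k-\lambda(k)S_k\Theta+\gamma I_k+\eta Q_k+\omega V_k-(\mu_k+d)S_k$, $V_k'=\mu_kS_k-\delta\lambda(k)V_k\Theta-(d+\omega)V_k$,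 $I_k'=\lambda(k)S_k\Theta+\delta\lambda(k)V_k\Theta-(\gamma+\beta+d)I_k$, $Q_k'=\beta I_k-(\eta+d)Q_k$. Its basic reproduction number is $R_0=\frac{1}{\langle k\rangle}\sum_{i=1}^n\frac{\lambda(i)\varphi(i)p(i)\Lambda_i(\omega+d+\delta\mu_i)}{d(\gamma+\beta+d)(\omega+\mu_i+d)}$. *)

theory Defs
  imports "HOL-Analysis.Analysis"
begin

text \<open>Degree classes are indexed by k in {1..n}; p k is the degree distribution.\<close>

definition kmean :: "nat \<Rightarrow> (nat \<Rightarrow> real) \<Rightarrow> real" where
  "kmean n p = (\<Sum>k=1..n. real k * p k)"

definition Nstar :: "real \<Rightarrow> real \<Rightarrow> real \<Rightarrow> nat \<Rightarrow> real" where
  "Nstar b d Phi k = b * real k * Phi / (d + b * real k * Phi)"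

definition Lam :: "real \<Rightarrow> real \<Rightarrow> real \<Rightarrow> nat \<Rightarrow> real" where
  "Lam b d Phi k = b * real k * (1 - Nstar b d Phi k) * Phi"

definition Theta :: "nat \<Rightarrow> (nat \<Rightarrow> real) \<Rightarrow> (nat \<Rightarrow> real) \<Rightarrow> (nat \<Rightarrow> real \<Rightarrow> real) \<Rightarrow> real \<Rightarrow> real" where
  "Theta n p phi I t = (1 / kmean n p) * (\<Sum>i=1..n. phi i * p i * I i t)"

definition R0 :: "nat \<Rightarrow> (nat \<Rightarrow> real) \<Rightarrow> real \<Rightarrow> real \<Rightarrow> real \<Rightarrow> (nat \<Rightarrow> real) \<Rightarrow> (nat \<Rightarrow> real)
   \<Rightarrow> (nat \<Rightarrow> real) \<Rightarrow> real \<Rightarrow> real \<Rightarrow> real \<Rightarrow> real \<Rightarrow> real" where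
  "R0 n p b d Phi lam phi mu \<beta> \<gamma> \<omega> \<delta> =
     (1 / kmean n p) * (\<Sum>i=1..n. lam i * phi i * p i * Lam b d Phi i * (\<omega> + d + \<delta> * mu i)
        / (d * (\<gamma> + \<beta> + d) * (\<omega> + mu i + d)))"

definition SVIQS_solution ::
  "nat \<Rightarrow> (nat \<Rightarrow> real) \<Rightarrow> real \<Rightarrow> real \<Rightarrow> real \<Rightarrow> (nat \<Rightarrow> real) \<Rightarrow> (nat \<Rightarrow> real) \<Rightarrow> (nat \<Rightarrow> real)
   \<Rightarrow> real \<Rightarrow> real \<Rightarrow> real \<Rightarrow> real \<Rightarrow> real
   \<Rightarrow> (nat \<Rightarrow> real \<Rightarrow> real) \<Rightarrow> (nat \<Rightarrow> real \<Rightarrow> real) \<Rightarrow> (nat \<Rightarrow> real \<Rightarrow> real) \<Rightarrow> (nat \<Rightarrow> real \<Rightarrow> real) \<Rightarrow> bool"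
where
  "SVIQS_solution n p b d Phi lam phi mu \<beta> \<gamma> \<eta> \<omega> \<delta> S V I Q \<longleftrightarrow>
    (\<forall>k\<in>{1..n}. \<forall>t\<ge>0.
      (S k has_real_derivative
         (Lam b d Phi k - lam k * S k t * Theta n p phi I t + \<gamma> * I k t + \<eta> * Q k t + \<omega> * V k t
          - (mu k + d) * S k t)) (at t within {0..}) \<and>
      (V k has_real_derivative
         (mu k * S k t - \<delta> * lam k * V k t * Theta n p phi I t - (d + \<omega>) * V k t)) (at t within {0..}) \<and>
      (I k has_real_derivative
         (lam k * S k t * Theta n p phi I t + \<delta> * lam k * V k t * Theta n p phi I t
          - (\<gamma> + \<beta> + d) * I k t)) (at t within {0..}) \<and>
      (Q k has_real_derivative (\<beta> * I k t - (\<eta> + d) * Q k t)) (at t within {0..}))"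

end

theory Submission
  imports Defs
begin

text \<open>Solutions stay in the simplex \<open>S\<^sub>k, V\<^sub>k, I\<^sub>k, Q\<^sub>k \<ge> 0\<close>, \<open>S\<^sub>k + V\<^sub>k + I\<^sub>k + Q\<^sub>k = N\<^sub>k\<^sup>*\<close>
  (quasi-positivity of the vector field and conservation of the class populations). Along a
  solution with \<open>\<Theta> > 0\<close> consider \<open>L = ln \<Theta> + \<Sum>\<^sub>k w\<^sub>k (c1\<^sub>k S\<^sub>k + c2\<^sub>k V\<^sub>k)\<close> with
  \<open>w\<^sub>k = \<lambda>(k) \<phi>(k) p(k) / \<langle>k\<rangle>\<close>. For suitable constants \<open>c1\<^sub>k, c2\<^sub>k\<close> one gets
  \<open>L' \<ge> (\<gamma> + \<beta> + d)(R\<^sub>0 - 1) - C \<Theta>\<close>, and \<open>L - ln \<Theta>\<close> is bounded. Hence while \<open>\<Theta>\<close> stays below a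
  threshold, \<open>ln \<Theta>\<close> grows linearly: \<open>\<Theta>\<close> eventually reaches the threshold, every later excursion
  below it lasts less than a fixed time \<open>T\<close>, and during such an excursion \<open>L\<close> decreases at a
  bounded rate, since \<open>\<Theta>\<close> itself is bounded. This gives a uniform positive lower bound for \<open>\<Theta>\<close>,
  and \<open>\<Theta>\<close> is dominated by a multiple of \<open>\<Sum>\<^sub>k p(k) I\<^sub>k\<close>.\<close>

section \<open>Comparison and invariance lemmas\<close>

lemma halfline_DERIV_nonneg_imp_le:
  fixes f f' :: "real \<Rightarrow> real"
  assumes f': "\<And>t. t \<ge> 0 \<Longrightarrow> (f has_real_derivative f' t) (at t within {0..})"
    and "0 \<le> a" "a \<le> b" and nonneg: "\<And>t. a < t \<Longrightarrow> t < b \<Longrightarrow> f' t \<ge> 0"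
  shows "f a \<le> f b"
proof (rule DERIV_nonneg_imp_increasing_open[OF \<open>a \<le> b\<close>])
  fix t assume t: "a < t" "t < b"
  then have "t \<in> interior {0..}" using \<open>0 \<le> a\<close> by simp
  then have "(f has_real_derivative f' t) (at t)"
    using f'[of t] t \<open>0 \<le> a\<close> at_within_interior[OF \<open>t \<in> interior {0..}\<close>] by simp
  then show "\<exists>y. (f has_real_derivative y) (at t) \<and> 0 \<le> y" using nonneg t by blast
next
  have "continuous_on {0..} f" by (rule DERIV_continuous_on) (use f' in auto)
  then show "continuous_on {a..b} f" by (rule continuous_on_subset) (use \<open>0 \<le> a\<close> in auto)
qed

lemma DERIV_pos_imp_less_before:
  fixes f :: "real \<Rightarrow> real"
  assumes "(f has_real_derivative D) (at \<tau> within {0..})" "D > 0" "\<tau> > 0"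
  obtains s where "0 \<le> s" "s < \<tau>" "f s < f \<tau>"
proof -
  have "(f has_real_derivative D) (at \<tau>)"
    using assms(1,3) at_within_interior[of \<tau> "{0..}"] by simp
  then obtain h where "h > 0" and less: "\<And>s. 0 < s \<Longrightarrow> s < h \<Longrightarrow> f (\<tau> - s) < f \<tau>"
    using DERIV_pos_inc_left assms(2) by blast
  define s where "s = min (h / 2) \<tau>"
  have "0 < s" "s < h" "s \<le> \<tau>" using \<open>h > 0\<close> assms(3) unfolding s_def by auto
  then show thesis using that[of "\<tau> - s"] less[of s] by simp
qed

lemma first_vanishing_time:
  fixes y :: "'j \<Rightarrow> real \<Rightarrow> real"
  assumes "finite J" and cont: "\<And>i. i \<in> J \<Longrightarrow> continuous_on {0..T} (y i)"
    and pos0: "\<And>i. i \<in> J \<Longrightarrow> y i 0 > 0" and "j \<in> J" "0 \<le> T" "y j T \<le> 0"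
  obtains \<tau> i where "0 < \<tau>" "\<tau> \<le> T" "i \<in> J" "y i \<tau> = 0"
    "\<And>i s. i \<in> J \<Longrightarrow> 0 \<le> s \<Longrightarrow> s < \<tau> \<Longrightarrow> y i s > 0"
    "\<And>i. i \<in> J \<Longrightarrow> y i \<tau> \<ge> 0"
proof -
  define Z where "Z = (\<Union>i\<in>J. {0..T} \<inter> y i -` {..0})"
  have "closed Z"
    unfolding Z_def using \<open>finite J\<close>
    by (intro closed_UN ballI continuous_closed_preimage cont) auto
  moreover have "T \<in> Z" unfolding Z_def using assms by auto
  moreover have "bdd_below Z" unfolding Z_def by (auto intro: bdd_belowI[where m=0])
  ultimately have "Inf Z \<in> Z" and Inf_le: "\<And>s. s \<in> Z \<Longrightarrow> Inf Z \<le> s"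
    by (auto intro: closed_contains_Inf cInf_lower)
  define \<tau> where "\<tau> = Inf Z"
  obtain i where i: "i \<in> J" "y i \<tau> \<le> 0" "0 \<le> \<tau>" "\<tau> \<le> T"
    using \<open>Inf Z \<in> Z\<close> unfolding Z_def \<tau>_def by auto
  have before: "y i' s > 0" if "i' \<in> J" "0 \<le> s" "s < \<tau>" for i' s
  proof (rule ccontr)
    assume "\<not> y i' s > 0"
    then have "s \<in> Z" unfolding Z_def using that i by (force simp: not_less)
    then show False using Inf_le that unfolding \<tau>_def by fastforce
  qed
  have "\<tau> > 0" using i pos0 by (cases "\<tau> = 0") force+
  have at_\<tau>: "y i' \<tau> \<ge> 0" if i': "i' \<in> J" for i'
  proof (rule ccontr)
    assume neg: "\<not> y i' \<tau> \<ge> 0"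
    have "continuous_on {0..\<tau>} (y i')"
      using cont[OF i'] by (rule continuous_on_subset) (use i in auto)
    then obtain s where "0 \<le> s" "s \<le> \<tau>" "y i' s = 0"
      using IVT2'[of "y i'" \<tau> 0 0] neg pos0[OF i'] i by force
    then show False using before[OF i'] neg by (cases "s = \<tau>") force+
  qed
  show thesis using that[OF \<open>\<tau> > 0\<close> \<open>\<tau> \<le> T\<close> \<open>i \<in> J\<close> _ before at_\<tau>] i at_\<tau>[OF \<open>i \<in> J\<close>] by simp
qed

lemma quasi_positive_invariance:
  fixes x x' :: "'j \<Rightarrow> real \<Rightarrow> real" and M :: "'j \<Rightarrow> real"
  assumes "finite J"
    and x': "\<And>j t. j \<in> J \<Longrightarrow> t \<ge> 0 \<Longrightarrow> (x j has_real_derivative x' j t) (at t within {0..})"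
    and init: "\<And>j. j \<in> J \<Longrightarrow> x j 0 \<ge> 0"
    and inward: "\<And>j t e. j \<in> J \<Longrightarrow> t \<ge> 0 \<Longrightarrow> 0 < e \<Longrightarrow> e \<le> e_max \<Longrightarrow> \<forall>i\<in>J. x i t \<ge> -e \<Longrightarrow>
                 x j t = -e \<Longrightarrow> x' j t \<ge> - (M j * e)"
    and "e_max > 0" "j \<in> J" "T \<ge> 0"
  shows "x j T \<ge> 0"
proof (rule ccontr)
  assume neg: "\<not> x j T \<ge> 0"
  define K where "K = (\<Sum>i\<in>J. \<bar>M i\<bar>) + 1"
  have K: "M i < K" if "i \<in> J" for i
    using member_le_sum[OF that, of "\<lambda>i. \<bar>M i\<bar>"] \<open>finite J\<close> unfolding K_def by force
  define \<epsilon> where "\<epsilon> = min e_max (- x j T) / (2 * exp (K * T))"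
  have \<epsilon>: "\<epsilon> > 0" "\<epsilon> * exp (K * T) < e_max" "\<epsilon> * exp (K * T) < - x j T"
    using \<open>e_max > 0\<close> neg unfolding \<epsilon>_def by (auto simp: min_def)
  text \<open>Shift by \<open>\<epsilon> e\<^sup>K\<^sup>t\<close> with \<open>K > M\<close>: the shifted coordinates start positive, and at the first
    time one of them vanishes its derivative would be positive.\<close>
  define y where "y i t = x i t + \<epsilon> * exp (K * t)" for i t
  have y': "(y i has_real_derivative x' i t + K * (\<epsilon> * exp (K * t))) (at t within {0..})"
    if "i \<in> J" "t \<ge> 0" for i t
    unfolding y_def using x'[OF that] by (auto intro!: derivative_eq_intros)
  have "continuous_on {0..T} (y i)" if "i \<in> J" for i
  proof -
    have "continuous_on {0..} (y i)" by (rule DERIV_continuous_on) (use y' that in auto)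
    then show ?thesis by (rule continuous_on_subset) auto
  qed
  moreover have "y j T \<le> 0" using \<epsilon> unfolding y_def by simp
  moreover have "y i 0 > 0" if "i \<in> J" for i using init[OF that] \<epsilon> unfolding y_def by simp
  ultimately obtain \<tau> i where \<tau>: "0 < \<tau>" "\<tau> \<le> T" "i \<in> J" "y i \<tau> = 0"
    and before: "\<And>s. 0 \<le> s \<Longrightarrow> s < \<tau> \<Longrightarrow> y i s > 0" and at_\<tau>: "\<And>i'. i' \<in> J \<Longrightarrow> y i' \<tau> \<ge> 0"
    using first_vanishing_time[where y=y and J=J and T=T and j=j] \<open>finite J\<close> \<open>j \<in> J\<close> \<open>T \<ge> 0\<close> by metis
  define e where "e = \<epsilon> * exp (K * \<tau>)"
  have "e > 0" using \<epsilon> unfolding e_def by simp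
  have "K > 0" unfolding K_def by (simp add: add_nonneg_pos sum_nonneg)
  then have "exp (K * \<tau>) \<le> exp (K * T)" using \<tau> by simp
  then have "e \<le> \<epsilon> * exp (K * T)" unfolding e_def using \<epsilon>(1) by simp
  then have "e \<le> e_max" using \<epsilon>(2) by linarith
  have "\<forall>i'\<in>J. x i' \<tau> \<ge> -e" "x i \<tau> = -e"
    using at_\<tau> \<tau>(4) unfolding y_def e_def by (auto simp: add_eq_0_iff)
  then have "x' i \<tau> \<ge> - (M i * e)"
    using inward[OF \<tau>(3) less_imp_le[OF \<tau>(1)] \<open>e > 0\<close> \<open>e \<le> e_max\<close>] by simp
  moreover have "M i * e < K * e" using K[OF \<tau>(3)] \<open>e > 0\<close> by simp
  ultimately have "x' i \<tau> + K * e > 0" by linarith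
  moreover have "(y i has_real_derivative x' i \<tau> + K * e) (at \<tau> within {0..})"
    using y'[OF \<tau>(3) less_imp_le[OF \<tau>(1)]] unfolding e_def by simp
  ultimately obtain s where "0 \<le> s" "s < \<tau>" "y i s < y i \<tau>"
    using DERIV_pos_imp_less_before \<tau>(1) by blast
  then show False using before \<tau>(4) by force
qed

lemma mult_ge_neg_bounds:
  fixes x y :: real
  assumes "-u \<le> x" "x \<le> X" "-v \<le> y" "y \<le> Y" "0 \<le> u" "0 \<le> v" "0 \<le> X" "0 \<le> Y"
  shows "- (u * Y + X * v) \<le> x * y"
proof -
  have "0 \<le> u * Y" "0 \<le> X * v" using assms by simp_all
  consider "0 \<le> x" "0 \<le> y" | "0 \<le> x" "y < 0" | "x < 0" "0 \<le> y" | "x < 0" "y < 0" by linarith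
  then show ?thesis
  proof cases
    case 1
    then have "0 \<le> x * y" by simp
    then show ?thesis using \<open>0 \<le> u * Y\<close> \<open>0 \<le> X * v\<close> by linarith
  next
    case 2
    have "X * (-v) \<le> X * y" using assms by (intro mult_left_mono) auto
    also have "\<dots> \<le> x * y" using 2 assms by (intro mult_right_mono_neg) auto
    finally show ?thesis using \<open>0 \<le> u * Y\<close> by simp
  next
    case 3
    have "(-u) * Y \<le> x * Y" using assms by (intro mult_right_mono) auto
    also have "\<dots> \<le> x * y" using 3 assms by (intro mult_left_mono_neg) auto
    finally show ?thesis using \<open>0 \<le> X * v\<close> by simp
  next
    case 4
    then have "0 \<le> x * y" by (simp add: mult_nonpos_nonpos)
    then show ?thesis using \<open>0 \<le> u * Y\<close> \<open>0 \<le> X * v\<close> by linarith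
  qed
qed

lemma mult_unit_interval_bounds:
  fixes \<delta> v :: real
  assumes "0 \<le> \<delta>" "\<delta> \<le> 1"
  shows "min 0 v \<le> \<delta> * v" "\<delta> * v \<le> max 0 v"
proof -
  have "v * 1 \<le> v * \<delta>" if "v < 0" using that assms by (intro mult_left_mono_neg) auto
  then show "min 0 v \<le> \<delta> * v" "\<delta> * v \<le> max 0 v"
    using assms by (auto simp: mult_left_le_one_le mult_nonneg_nonpos min_def max_def mult.commute)
qed

lemma last_time_at_least:
  fixes f :: "real \<Rightarrow> real"
  assumes "continuous_on {a..b} f" "a \<le> b" "f a \<ge> c"
  obtains s where "a \<le> s" "s \<le> b" "f s \<ge> c" "\<And>v. s < v \<Longrightarrow> v \<le> b \<Longrightarrow> f v < c"
proof -
  define Z where "Z = {a..b} \<inter> f -` {c..}"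
  have "closed Z" unfolding Z_def using assms(1) by (rule continuous_closed_preimage) auto
  moreover have "a \<in> Z" unfolding Z_def using assms by auto
  moreover have "bdd_above Z" unfolding Z_def by (auto intro: bdd_aboveI[where M=b])
  ultimately have "Sup Z \<in> Z" and le_Sup: "\<And>v. v \<in> Z \<Longrightarrow> v \<le> Sup Z"
    by (auto intro: closed_contains_Sup cSup_upper)
  moreover have "f v < c" if "Sup Z < v" "v \<le> b" for v
    using le_Sup[of v] that \<open>Sup Z \<in> Z\<close> unfolding Z_def by force
  ultimately show thesis using that unfolding Z_def by auto
qed

locale sviqs =
  fixes n :: nat and p lam phi mu :: "nat \<Rightarrow> real" and b d Phi \<beta> \<gamma> \<eta> \<omega> \<delta> :: real
  assumes n: "n \<ge> 1"
    and p_pos: "\<forall>k\<in>{1..n}. p k > 0"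
    and bd: "b > d" "d > 0"
    and Phi_pos: "Phi > 0"
    and lam_pos: "\<forall>k\<in>{1..n}. lam k > 0"
    and phi_pos: "\<forall>k\<in>{1..n}. phi k > 0"
    and mu_pos: "\<forall>k\<in>{1..n}. mu k > 0"
    and rates: "\<beta> > 0" "\<gamma> > 0" "\<eta> > 0" "\<omega> > 0"
    and delta: "0 \<le> \<delta>" "\<delta> \<le> 1"
begin

abbreviation "kbar \<equiv> kmean n p"
abbreviation "N \<equiv> Nstar b d Phi"
abbreviation "\<Lambda> \<equiv> Lam b d Phi"
abbreviation "\<alpha> \<equiv> \<gamma> + \<beta> + d"
abbreviation "\<Theta> \<equiv> Theta n p phi"

lemma class_params_pos:
  assumes "k \<in> {1..n}"
  shows "p k > 0" "lam k > 0" "phi k > 0" "mu k > 0"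
  using assms p_pos lam_pos phi_pos mu_pos by auto

lemma kbar_pos: "kbar > 0"
  unfolding kmean_def using n p_pos by (intro sum_pos) auto

lemma contact_pos: "k \<in> {1..n} \<Longrightarrow> b * real k * Phi > 0"
  using bd Phi_pos by simp

lemma N_pos: "k \<in> {1..n} \<Longrightarrow> N k > 0"
  unfolding Nstar_def using contact_pos[of k] bd by (intro divide_pos_pos) auto

lemma N_less_1: "k \<in> {1..n} \<Longrightarrow> N k < 1"
  unfolding Nstar_def using contact_pos[of k] bd by (simp add: divide_less_eq)

lemma Lam_eq: "k \<in> {1..n} \<Longrightarrow> \<Lambda> k = d * N k"
  unfolding Lam_def Nstar_def using contact_pos[of k] bd by (simp add: field_simps)

definition Theta_one :: real where
  "Theta_one = (\<Sum>i=1..n. phi i * p i) / kbar"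

lemma Theta_one_nonneg: "Theta_one \<ge> 0"
  unfolding Theta_one_def using kbar_pos phi_pos p_pos
  by (intro divide_nonneg_pos sum_nonneg) (auto intro: less_imp_le)

lemma Theta_mono:
  assumes "\<forall>i\<in>{1..n}. I i t \<le> J i s"
  shows "\<Theta> I t \<le> \<Theta> J s"
  unfolding Theta_def using assms kbar_pos phi_pos p_pos
  by (intro mult_left_mono sum_mono) (auto intro: less_imp_le)

lemma Theta_const: "\<Theta> (\<lambda>_ _. c) t = Theta_one * c"
  unfolding Theta_def Theta_one_def by (simp add: sum_distrib_right)

lemma Theta_ge:
  assumes "\<forall>i\<in>{1..n}. I i t \<ge> c"
  shows "\<Theta> I t \<ge> Theta_one * c"
  using Theta_mono[of "\<lambda>_ _. c" t I t] assms by (simp add: Theta_const)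

lemma Theta_le:
  assumes "\<forall>i\<in>{1..n}. I i t \<le> c"
  shows "\<Theta> I t \<le> Theta_one * c"
  using Theta_mono[of I t "\<lambda>_ _. c" t] assms by (simp add: Theta_const)

lemma Theta_le_prevalence:
  assumes "\<forall>i\<in>{1..n}. I i t \<ge> 0"
  shows "kbar * \<Theta> I t \<le> (\<Sum>i=1..n. phi i) * (\<Sum>i=1..n. p i * I i t)"
proof -
  have "kbar * \<Theta> I t = (\<Sum>i=1..n. phi i * (p i * I i t))"
    unfolding Theta_def using kbar_pos by (simp add: mult.assoc)
  also have "\<dots> \<le> (\<Sum>i=1..n. (\<Sum>j=1..n. phi j) * (p i * I i t))"
  proof (intro sum_mono mult_right_mono member_le_sum)
    fix i assume "i \<in> {1..n}"
    then show "0 \<le> p i * I i t" using assms class_params_pos(1)[of i] by simp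
  qed (use phi_pos in \<open>auto intro: less_imp_le\<close>)
  finally show ?thesis by (simp add: sum_distrib_left)
qed

text \<open>The weights of the Lyapunov function \<open>ln \<Theta> + \<Sum>\<^sub>k w k * (c1 k * S\<^sub>k + c2 k * V\<^sub>k)\<close>;
  \<open>c1\<close> and \<open>c2\<close> solve the linear system \<open>c1_c2_S\<close>, \<open>c1_c2_V\<close>, which makes the \<open>S\<close>- and
  \<open>V\<close>-terms of its derivative cancel.\<close>

definition c1 :: "nat \<Rightarrow> real" where
  "c1 k = (d + \<omega> + mu k * \<delta>) / (d * (mu k + \<omega> + d))"

definition c2 :: "nat \<Rightarrow> real" where
  "c2 k = (\<delta> * (mu k + d) + \<omega>) / (d * (mu k + \<omega> + d))"

definition w :: "nat \<Rightarrow> real" where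
  "w k = lam k * phi k * p k / kbar"

lemma denom_pos: "k \<in> {1..n} \<Longrightarrow> d * (mu k + \<omega> + d) > 0"
  using bd class_params_pos(4)[of k] rates by simp

lemma c1_pos: "k \<in> {1..n} \<Longrightarrow> c1 k > 0"
  unfolding c1_def using denom_pos[of k] bd rates class_params_pos(4)[of k] delta
  by (intro divide_pos_pos) (auto intro!: add_pos_nonneg)

lemma c2_nonneg: "k \<in> {1..n} \<Longrightarrow> c2 k \<ge> 0"
  unfolding c2_def using denom_pos[of k] bd rates class_params_pos(4)[of k] delta
  by (intro divide_nonneg_pos) auto

lemma c1_c2_S: "k \<in> {1..n} \<Longrightarrow> c1 k * (mu k + d) = 1 + c2 k * mu k"
  using denom_pos[of k] unfolding c1_def c2_def by (simp add: field_simps)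

lemma c1_c2_V: "k \<in> {1..n} \<Longrightarrow> c2 k * (d + \<omega>) = \<delta> + c1 k * \<omega>"
  using denom_pos[of k] unfolding c1_def c2_def by (simp add: field_simps)

lemma w_pos: "k \<in> {1..n} \<Longrightarrow> w k > 0"
  unfolding w_def using kbar_pos lam_pos phi_pos p_pos by auto

lemma sum_w_c1_Lam: "(\<Sum>k=1..n. w k * c1 k * \<Lambda> k) = \<alpha> * R0 n p b d Phi lam phi mu \<beta> \<gamma> \<omega> \<delta>"
  unfolding R0_def sum_distrib_left
proof (intro sum.cong refl)
  fix k assume "k \<in> {1..n}"
  then have "\<omega> + mu k + d \<noteq> 0" using rates bd class_params_pos(4)[of k] by auto
  moreover have "L / kbar * (c / (d * Y)) * M = A * (1 / kbar * (L * M * c / (d * A * Y)))"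
    if "Y \<noteq> 0" "A \<noteq> 0" for L c Y M A
    using that bd kbar_pos by (simp add: field_simps)
  moreover have "\<alpha> \<noteq> 0" using rates bd by simp
  moreover have "d + \<omega> + mu k * \<delta> = \<omega> + d + \<delta> * mu k" "mu k + \<omega> + d = \<omega> + mu k + d" by simp_all
  ultimately show "w k * c1 k * \<Lambda> k = \<alpha> * (1 / kbar * (lam k * phi k * p k * \<Lambda> k * (\<omega> + d + \<delta> * mu k)
      / (d * (\<gamma> + \<beta> + d) * (\<omega> + mu k + d))))"
    unfolding w_def c1_def by metis
qed

definition growth :: real where
  "growth = \<alpha> * (R0 n p b d Phi lam phi mu \<beta> \<gamma> \<omega> \<delta> - 1)"

definition damping :: real where
  "damping = (\<Sum>k=1..n. w k * lam k * (c1 k + c2 k))"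

definition P_max :: real where
  "P_max = (\<Sum>k=1..n. w k * (c1 k + c2 k))"

lemma damping_nonneg: "damping \<ge> 0"
  unfolding damping_def
  using less_imp_le[OF w_pos] less_imp_le[OF class_params_pos(2)] less_imp_le[OF c1_pos] c2_nonneg
  by (intro sum_nonneg) (auto intro!: mult_nonneg_nonneg add_nonneg_nonneg)

lemma P_max_nonneg: "P_max \<ge> 0"
  unfolding P_max_def using less_imp_le[OF w_pos] less_imp_le[OF c1_pos] c2_nonneg
  by (intro sum_nonneg) (auto intro!: mult_nonneg_nonneg add_nonneg_nonneg)

end

section \<open>Solutions: conservation and positivity\<close>

locale sviqs_solution = sviqs +
  fixes S V I Q :: "nat \<Rightarrow> real \<Rightarrow> real"
  assumes solution: "SVIQS_solution n p b d Phi lam phi mu \<beta> \<gamma> \<eta> \<omega> \<delta> S V I Q"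
    and init: "\<forall>k\<in>{1..n}. S k 0 \<ge> 0 \<and> V k 0 \<ge> 0 \<and> I k 0 \<ge> 0 \<and> Q k 0 \<ge> 0 \<and>
               S k 0 + V k 0 + I k 0 + Q k 0 = Nstar b d Phi k"
begin

definition S' :: "nat \<Rightarrow> real \<Rightarrow> real" where
  "S' k t = \<Lambda> k - lam k * S k t * \<Theta> I t + \<gamma> * I k t + \<eta> * Q k t + \<omega> * V k t - (mu k + d) * S k t"

definition V' :: "nat \<Rightarrow> real \<Rightarrow> real" where
  "V' k t = mu k * S k t - \<delta> * lam k * V k t * \<Theta> I t - (d + \<omega>) * V k t"

definition I' :: "nat \<Rightarrow> real \<Rightarrow> real" where
  "I' k t = lam k * S k t * \<Theta> I t + \<delta> * lam k * V k t * \<Theta> I t - \<alpha> * I k t"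

definition Q' :: "nat \<Rightarrow> real \<Rightarrow> real" where
  "Q' k t = \<beta> * I k t - (\<eta> + d) * Q k t"

context
  fixes k :: nat and t :: real assumes k: "k \<in> {1..n}" and t: "t \<ge> 0"
begin

lemma S_deriv: "(S k has_real_derivative S' k t) (at t within {0..})"
  using solution k t unfolding SVIQS_solution_def S'_def by blast

lemma V_deriv: "(V k has_real_derivative V' k t) (at t within {0..})"
  using solution k t unfolding SVIQS_solution_def V'_def by blast

lemma I_deriv: "(I k has_real_derivative I' k t) (at t within {0..})"
  using solution k t unfolding SVIQS_solution_def I'_def by blast

lemma Q_deriv: "(Q k has_real_derivative Q' k t) (at t within {0..})"
  using solution k t unfolding SVIQS_solution_def Q'_def by blast

end

lemma population_conserved:
  assumes k: "k \<in> {1..n}" and t: "t \<ge> 0"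
  shows "S k t + V k t + I k t + Q k t = N k"
proof -
  define h where "h t = exp (d * t) * (S k t + V k t + I k t + Q k t - N k)" for t
  have "(h has_real_derivative 0) (at t within {0..})" if "t \<in> {0..}" for t
    unfolding h_def using that
    by (auto intro!: derivative_eq_intros S_deriv[OF k] V_deriv[OF k] I_deriv[OF k] Q_deriv[OF k]
        simp: S'_def V'_def I'_def Q'_def Lam_eq[OF k] algebra_simps)
  then obtain c where "\<forall>t\<in>{0..}. h t = c"
    using has_field_derivative_zero_constant[of "{0..}" h] by auto
  moreover have "h 0 = 0" unfolding h_def using init k by simp
  ultimately have "h t = 0" using t by force
  then show ?thesis unfolding h_def by simp
qed

definition compartments_ge :: "real \<Rightarrow> real \<Rightarrow> bool" where
  "compartments_ge e t \<longleftrightarrow> (\<forall>i\<in>{1..n}. -e \<le> S i t \<and> -e \<le> V i t \<and> -e \<le> I i t \<and> -e \<le> Q i t)"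

context
  fixes t e :: real
  assumes t: "t \<ge> 0" and e: "0 < e" "e \<le> 1" and ge: "compartments_ge e t"
begin

lemma compartments_le_4:
  assumes k: "k \<in> {1..n}"
  shows "S k t \<le> 4" "V k t \<le> 4" "I k t \<le> 4"
  using population_conserved[OF k t] N_less_1[OF k] ge k e unfolding compartments_ge_def by force+

lemma Theta_ge_neg: "\<Theta> I t \<ge> - (Theta_one * e)"
  using Theta_ge[where I=I and t=t and c="-e"] ge unfolding compartments_ge_def by simp

lemma Theta_le_4: "\<Theta> I t \<le> Theta_one * 4"
  using Theta_le[of I t 4] compartments_le_4 by simp

lemma e_Theta_ge: "e * \<Theta> I t \<ge> - (Theta_one * e)"
proof -
  have "e * \<Theta> I t \<ge> e * (- (Theta_one * e))"
    using Theta_ge_neg e by (intro mult_left_mono) auto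
  moreover have "Theta_one * (e * e) \<le> Theta_one * e"
    using Theta_one_nonneg e by (intro mult_left_mono) (auto simp: mult_left_le_one_le)
  ultimately show ?thesis by (simp add: algebra_simps)
qed

context
  fixes k :: nat assumes k: "k \<in> {1..n}"
begin

lemma lam_e_Theta_ge: "lam k * (e * \<Theta> I t) \<ge> - (lam k * Theta_one * e)"
  using mult_left_mono[OF e_Theta_ge, of "lam k"] class_params_pos(2)[OF k] by simp

lemma S'_inward:
  assumes "S k t = -e"
  shows "S' k t \<ge> - ((lam k * Theta_one + \<gamma> + \<eta> + \<omega>) * e)"
proof -
  have "S' k t = \<Lambda> k + lam k * (e * \<Theta> I t) + \<gamma> * I k t + \<eta> * Q k t + \<omega> * V k t + (mu k + d) * e"
    unfolding S'_def using assms by (simp add: algebra_simps)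
  moreover have "\<Lambda> k \<ge> 0" "(mu k + d) * e \<ge> 0"
    using Lam_eq[OF k] N_pos[OF k] class_params_pos(4)[OF k] bd e by auto
  moreover have "\<gamma> * I k t \<ge> - (\<gamma> * e)" "\<eta> * Q k t \<ge> - (\<eta> * e)" "\<omega> * V k t \<ge> - (\<omega> * e)"
    using ge k rates unfolding compartments_ge_def by (auto intro: mult_left_mono[of "-e", simplified])
  ultimately show ?thesis using lam_e_Theta_ge by (simp add: algebra_simps)
qed

lemma V'_inward:
  assumes "V k t = -e"
  shows "V' k t \<ge> - ((mu k + lam k * Theta_one) * e)"
proof -
  have "V' k t = mu k * S k t + \<delta> * (lam k * (e * \<Theta> I t)) + (d + \<omega>) * e"
    unfolding V'_def using assms by (simp add: algebra_simps)
  moreover have "mu k * S k t \<ge> - (mu k * e)"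
    using ge k class_params_pos(4)[OF k] unfolding compartments_ge_def by (auto intro: mult_left_mono[of "-e", simplified])
  moreover have "\<delta> * (lam k * (e * \<Theta> I t)) \<ge> \<delta> * - (lam k * Theta_one * e)"
    using lam_e_Theta_ge delta by (intro mult_left_mono) auto
  moreover have "\<delta> * (lam k * Theta_one * e) \<le> lam k * Theta_one * e"
    using delta class_params_pos(2)[OF k] Theta_one_nonneg e by (intro mult_left_le_one_le) auto
  moreover have "(d + \<omega>) * e \<ge> 0" using bd rates e by simp
  ultimately show ?thesis by (simp add: algebra_simps)
qed

lemma I'_inward:
  assumes "I k t = -e"
  shows "I' k t \<ge> - (16 * lam k * Theta_one * e)"
proof -
  have "I' k t = lam k * (\<Theta> I t * (S k t + \<delta> * V k t)) + \<alpha> * e"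
    unfolding I'_def using assms by (simp add: algebra_simps)
  moreover have "\<Theta> I t * (S k t + \<delta> * V k t) \<ge> - (Theta_one * e * 8 + Theta_one * 4 * (2 * e))"
  proof (rule mult_ge_neg_bounds)
    show "\<Theta> I t \<le> Theta_one * 4" by (rule Theta_le_4)
    have "-e \<le> min 0 (V k t)" "max 0 (V k t) \<le> 4"
      using ge k compartments_le_4(2)[OF k] e unfolding compartments_ge_def by auto
    then have "-e \<le> \<delta> * V k t" "\<delta> * V k t \<le> 4"
      using mult_unit_interval_bounds[OF delta, of "V k t"] by linarith+
    moreover have "-e \<le> S k t" using ge k unfolding compartments_ge_def by auto
    ultimately show "- (2 * e) \<le> S k t + \<delta> * V k t" "S k t + \<delta> * V k t \<le> 8"
      using compartments_le_4(1)[OF k] by linarith+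
  qed (use Theta_ge_neg Theta_one_nonneg e in auto)
  moreover have "lam k \<ge> 0" "\<alpha> * e \<ge> 0" using class_params_pos(2)[OF k] rates bd e by auto
  ultimately show ?thesis
    using mult_left_mono[of "- (16 * Theta_one * e)" "\<Theta> I t * (S k t + \<delta> * V k t)" "lam k"]
    by (simp add: algebra_simps)
qed

lemma Q'_inward:
  assumes "Q k t = -e"
  shows "Q' k t \<ge> - (\<beta> * e)"
proof -
  have "\<beta> * I k t \<ge> - (\<beta> * e)"
    using ge k rates unfolding compartments_ge_def by (auto intro: mult_left_mono[of "-e", simplified])
  moreover have "(\<eta> + d) * e \<ge> 0" using bd rates e by simp
  moreover have "Q' k t = \<beta> * I k t + (\<eta> + d) * e" unfolding Q'_def using assms by simp
  ultimately show ?thesis by linarith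
qed

end

end

lemma compartments_nonneg:
  assumes k: "k \<in> {1..n}" and t: "t \<ge> 0"
  shows "0 \<le> S k t" "0 \<le> V k t" "0 \<le> I k t" "0 \<le> Q k t"
proof -
  define J where "J = {..<4::nat} \<times> {1..n}"
  define x where "x = (\<lambda>(c, i) t. [S i t, V i t, I i t, Q i t] ! c)"
  define x' where "x' = (\<lambda>(c, i) t. [S' i t, V' i t, I' i t, Q' i t] ! c)"
  define M where "M = (\<lambda>(c, i). [lam i * Theta_one + \<gamma> + \<eta> + \<omega>, mu i + lam i * Theta_one,
                                  16 * lam i * Theta_one, \<beta>] ! c)"
  have J_cases: "\<exists>i\<in>{1..n}. j = (0, i) \<or> j = (1, i) \<or> j = (2, i) \<or> j = (3, i)" if "j \<in> J" for j
    using that unfolding J_def by (cases j) (auto simp: less_Suc_eq numeral_3_eq_3)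
  have "x j t \<ge> 0" if "j \<in> J" for j
  proof (rule quasi_positive_invariance[where J = J and x = x and x' = x' and M = M and e_max = 1])
    show "finite J" unfolding J_def by simp
    show "(x j has_real_derivative x' j t) (at t within {0..})" if "j \<in> J" "t \<ge> 0" for j t
      using J_cases[OF that(1)] by (auto simp: x_def x'_def S_deriv V_deriv I_deriv Q_deriv that(2))
    show "x j 0 \<ge> 0" if "j \<in> J" for j
      using J_cases[OF that] init by (auto simp: x_def)
    show "x' j t \<ge> - (M j * e)"
      if "j \<in> J" "t \<ge> 0" "0 < e" "e \<le> 1" "\<forall>i\<in>J. x i t \<ge> -e" "x j t = -e" for j t e
    proof -
      have "compartments_ge e t"
        unfolding compartments_ge_def
      proof
        fix i assume "i \<in> {1..n}"
        then have "(0, i) \<in> J" "(1, i) \<in> J" "(2, i) \<in> J" "(3, i) \<in> J" unfolding J_def by auto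
        then show "-e \<le> S i t \<and> -e \<le> V i t \<and> -e \<le> I i t \<and> -e \<le> Q i t"
          using that(5) unfolding x_def by force
      qed
      then show ?thesis using J_cases[OF that(1)] that(6)
        by (auto simp: x_def x'_def M_def S'_inward V'_inward I'_inward Q'_inward that(2-4))
    qed
  qed (use that t in auto)
  moreover have "(0, k) \<in> J" "(1, k) \<in> J" "(2, k) \<in> J" "(3, k) \<in> J" using k unfolding J_def by auto
  ultimately show "0 \<le> S k t" "0 \<le> V k t" "0 \<le> I k t" "0 \<le> Q k t" unfolding x_def by force+
qed

lemma compartments_le_1:
  assumes "k \<in> {1..n}" "t \<ge> 0"
  shows "S k t \<le> 1" "V k t \<le> 1" "I k t \<le> 1"
  using population_conserved[OF assms] compartments_nonneg[OF assms] N_less_1[OF assms(1)] by linarith+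

lemma Theta_nonneg: "t \<ge> 0 \<Longrightarrow> \<Theta> I t \<ge> 0"
  using Theta_ge[where I=I and t=t and c=0] compartments_nonneg by simp

lemma Theta_le_Theta_one: "t \<ge> 0 \<Longrightarrow> \<Theta> I t \<le> Theta_one"
  using Theta_le[of I t 1] compartments_le_1 by simp

definition G :: "real \<Rightarrow> real" where
  "G t = (\<Sum>k=1..n. w k * (S k t + \<delta> * V k t))"

lemma G_nonneg: "t \<ge> 0 \<Longrightarrow> G t \<ge> 0"
  unfolding G_def using less_imp_le[OF w_pos] compartments_nonneg delta
  by (intro sum_nonneg) (auto intro!: mult_nonneg_nonneg add_nonneg_nonneg)

lemma Theta_deriv:
  assumes t: "t \<ge> 0"
  shows "((\<lambda>t. \<Theta> I t) has_real_derivative \<Theta> I t * (G t - \<alpha>)) (at t within {0..})"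
proof -
  have deriv: "((\<lambda>t. \<Theta> I t) has_real_derivative (1 / kbar) * (\<Sum>i=1..n. phi i * p i * I' i t))
      (at t within {0..})"
    unfolding Theta_def by (intro DERIV_cmult DERIV_sum DERIV_cmult I_deriv) (use t in auto)
  have sum_I': "(\<Sum>i=1..n. phi i * p i * I' i t)
      = kbar * \<Theta> I t * G t - \<alpha> * (\<Sum>i=1..n. phi i * p i * I i t)"
    unfolding G_def sum_distrib_left sum_subtractf[symmetric]
    by (rule sum.cong) (use kbar_pos in \<open>auto simp: I'_def w_def field_simps\<close>)
  have sum_I: "(\<Sum>i=1..n. phi i * p i * I i t) = kbar * \<Theta> I t"
    unfolding Theta_def using kbar_pos by simp
  have "(1 / kbar) * (\<Sum>i=1..n. phi i * p i * I' i t) = \<Theta> I t * (G t - \<alpha>)"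
    unfolding sum_I' sum_I using kbar_pos by (simp add: field_simps)
  with deriv show ?thesis by simp
qed

end

section \<open>Persistence of the infection when \<open>R\<^sub>0 > 1\<close>\<close>

locale sviqs_endemic = sviqs +
  assumes R0_gt_1: "R0 n p b d Phi lam phi mu \<beta> \<gamma> \<omega> \<delta> > 1"
begin

lemma growth_pos: "growth > 0"
  unfolding growth_def using R0_gt_1 rates bd by simp

text \<open>Below \<open>Theta_low\<close> the Lyapunov function grows at rate at least \<open>growth / 2\<close>; an excursion
  below it therefore lasts less than \<open>recovery_time\<close>, during which \<open>ln \<Theta>\<close> loses at most
  \<open>damping * Theta_one * recovery_time + P_max\<close>.\<close>

definition Theta_low :: real where
  "Theta_low = growth / (2 * (damping + 1))"

definition recovery_time :: real where
  "recovery_time = 2 * P_max / growth + 1"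

definition Theta_floor :: real where
  "Theta_floor = Theta_low * exp (- (damping * Theta_one * recovery_time + P_max))"

definition prevalence_floor :: real where
  "prevalence_floor = kbar * Theta_floor / (\<Sum>k=1..n. phi k)"

lemma Theta_low_pos: "Theta_low > 0"
  unfolding Theta_low_def using growth_pos damping_nonneg by simp

lemma damping_Theta_low: "damping * Theta_low \<le> growth / 2"
proof -
  have "damping * Theta_low = growth / 2 * (damping / (damping + 1))"
    unfolding Theta_low_def using damping_nonneg by (simp add: field_simps)
  also have "\<dots> \<le> growth / 2 * 1" using damping_nonneg growth_pos by (intro mult_left_mono) auto
  finally show ?thesis by simp
qed

lemma recovery_time_pos: "recovery_time > 0"
  unfolding recovery_time_def using P_max_nonneg growth_pos by (simp add: add_nonneg_pos)

lemma Theta_floor_pos: "Theta_floor > 0"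
  unfolding Theta_floor_def using Theta_low_pos by simp

lemma Theta_floor_le: "Theta_floor \<le> Theta_low"
proof -
  have "damping * Theta_one * recovery_time + P_max \<ge> 0"
    using damping_nonneg Theta_one_nonneg recovery_time_pos P_max_nonneg by simp
  then show ?thesis unfolding Theta_floor_def using Theta_low_pos by (simp add: mult_left_le_one_le)
qed

lemma prevalence_floor_pos: "prevalence_floor > 0"
  unfolding prevalence_floor_def using kbar_pos Theta_floor_pos n phi_pos
  by (intro divide_pos_pos mult_pos_pos sum_pos) auto

end

locale sviqs_endemic_solution = sviqs_endemic + sviqs_solution +
  assumes prevalence_0_pos: "(\<Sum>k=1..n. p k * I k 0) > 0"
begin

lemma Theta_0_pos: "\<Theta> I 0 > 0"
proof -
  obtain k where k: "k \<in> {1..n}" "p k * I k 0 > 0"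
  proof (rule ccontr)
    assume "\<not> thesis"
    then have "(\<Sum>k=1..n. p k * I k 0) \<le> 0" using that by (intro sum_nonpos) (meson not_le)
    then show False using prevalence_0_pos by simp
  qed
  have "0 < (\<Sum>i=1..n. phi i * p i * I i 0)"
  proof (rule sum_pos2[of "{1..n}" k])
    show "0 < phi k * p k * I k 0" using class_params_pos(3)[OF k(1)] k(2) by (simp add: mult.assoc)
    show "0 \<le> phi i * p i * I i 0" if "i \<in> {1..n}" for i
      using class_params_pos[OF that] compartments_nonneg(3)[OF that] by simp
  qed (use k in auto)
  then show ?thesis unfolding Theta_def using kbar_pos by simp
qed

lemma Theta_pos:
  assumes t: "t \<ge> 0"
  shows "\<Theta> I t > 0"
proof -
  have "((\<lambda>t. exp (\<alpha> * t) * \<Theta> I t) has_real_derivative exp (\<alpha> * v) * (\<Theta> I v * G v))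
      (at v within {0..})" if "v \<ge> 0" for v
    by (rule derivative_eq_intros Theta_deriv[OF that] | simp add: algebra_simps)+
  then have "exp (\<alpha> * 0) * \<Theta> I 0 \<le> exp (\<alpha> * t) * \<Theta> I t"
    by (rule halfline_DERIV_nonneg_imp_le) (use t Theta_nonneg G_nonneg in auto)
  then have "0 < exp (\<alpha> * t) * \<Theta> I t" using Theta_0_pos by simp
  then show ?thesis by (simp add: zero_less_mult_iff)
qed

definition P :: "real \<Rightarrow> real" where
  "P t = (\<Sum>k=1..n. w k * (c1 k * S k t + c2 k * V k t))"

definition L :: "real \<Rightarrow> real" where
  "L t = ln (\<Theta> I t) + P t"

definition L' :: "real \<Rightarrow> real" where
  "L' t = G t - \<alpha> + (\<Sum>k=1..n. w k * (c1 k * S' k t + c2 k * V' k t))"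

lemma P_bounds:
  assumes t: "t \<ge> 0"
  shows "0 \<le> P t" "P t \<le> P_max"
proof -
  have "0 \<le> c1 k * S k t + c2 k * V k t" "c1 k * S k t + c2 k * V k t \<le> c1 k + c2 k"
    if k: "k \<in> {1..n}" for k
  proof -
    have "c1 k * S k t \<le> c1 k" "c2 k * V k t \<le> c2 k"
      using mult_left_mono[of "S k t" 1 "c1 k"] mult_left_mono[of "V k t" 1 "c2 k"]
        compartments_le_1[OF k t] c1_pos[OF k] c2_nonneg[OF k] by simp_all
    moreover have "0 \<le> c1 k * S k t" "0 \<le> c2 k * V k t"
      using compartments_nonneg[OF k t] c1_pos[OF k] c2_nonneg[OF k] by simp_all
    ultimately show "0 \<le> c1 k * S k t + c2 k * V k t" "c1 k * S k t + c2 k * V k t \<le> c1 k + c2 k"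
      by linarith+
  qed
  then show "0 \<le> P t" "P t \<le> P_max"
    unfolding P_def P_max_def using less_imp_le[OF w_pos]
    by (auto intro!: sum_nonneg sum_mono mult_nonneg_nonneg mult_left_mono)
qed

lemma ln_Theta_bounds:
  assumes "t \<ge> 0"
  shows "L t - P_max \<le> ln (\<Theta> I t)" "ln (\<Theta> I t) \<le> L t"
  using P_bounds[OF assms] unfolding L_def by auto

lemma L_deriv:
  assumes t: "t \<ge> 0"
  shows "(L has_real_derivative L' t) (at t within {0..})"
proof -
  have "((\<lambda>t. ln (\<Theta> I t)) has_real_derivative \<Theta> I t * (G t - \<alpha>) / \<Theta> I t) (at t within {0..})"
    using Theta_deriv[OF t] Theta_pos[OF t] by (auto intro!: derivative_eq_intros)
  moreover have "(P has_real_derivative (\<Sum>k=1..n. w k * (c1 k * S' k t + c2 k * V' k t))) (at t within {0..})"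
    unfolding P_def by (intro DERIV_sum DERIV_cmult DERIV_add S_deriv V_deriv) (use t in auto)
  ultimately show ?thesis
    unfolding L_def L'_def using DERIV_add Theta_pos[OF t] by fastforce
qed

lemma class_contribution_ge:
  assumes k: "k \<in> {1..n}" and t: "t \<ge> 0"
  shows "c1 k * S' k t + c2 k * V' k t + (S k t + \<delta> * V k t)
    \<ge> c1 k * \<Lambda> k - \<Theta> I t * (lam k * (c1 k + c2 k))"
proof -
  have "c1 k * S' k t + c2 k * V' k t + (S k t + \<delta> * V k t)
     = c1 k * \<Lambda> k + c1 k * (\<gamma> * I k t + \<eta> * Q k t) - lam k * \<Theta> I t * (c1 k * S k t + c2 k * (\<delta> * V k t))
       + S k t * (1 + c2 k * mu k - c1 k * (mu k + d)) + V k t * (\<delta> + c1 k * \<omega> - c2 k * (d + \<omega>))"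
    unfolding S'_def V'_def by (simp add: algebra_simps)
  also have "\<dots> = c1 k * \<Lambda> k + c1 k * (\<gamma> * I k t + \<eta> * Q k t)
      - lam k * \<Theta> I t * (c1 k * S k t + c2 k * (\<delta> * V k t))"
    using c1_c2_S[OF k] c1_c2_V[OF k] by simp
  finally have eq: "c1 k * S' k t + c2 k * V' k t + (S k t + \<delta> * V k t) = \<dots>" .
  have recovered: "c1 k * (\<gamma> * I k t + \<eta> * Q k t) \<ge> 0"
    using c1_pos[OF k] rates compartments_nonneg[OF k t] by simp
  have "\<delta> * V k t \<le> 1"
    using mult_unit_interval_bounds(2)[OF delta, of "V k t"] compartments_le_1(2)[OF k t] by simp
  then have "c2 k * (\<delta> * V k t) \<le> c2 k * 1" using c2_nonneg[OF k] by (intro mult_left_mono)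
  moreover have "c1 k * S k t \<le> c1 k * 1"
    using compartments_le_1(1)[OF k t] c1_pos[OF k] by (intro mult_left_mono) auto
  ultimately have "c1 k * S k t + c2 k * (\<delta> * V k t) \<le> c1 k + c2 k" by simp
  then have "lam k * \<Theta> I t * (c1 k * S k t + c2 k * (\<delta> * V k t)) \<le> lam k * \<Theta> I t * (c1 k + c2 k)"
    using class_params_pos(2)[OF k] Theta_nonneg[OF t] by (intro mult_left_mono) auto
  with recovered show ?thesis unfolding eq by (simp add: algebra_simps)
qed

lemma L'_ge:
  assumes t: "t \<ge> 0"
  shows "L' t \<ge> growth - damping * \<Theta> I t"
proof -
  have "L' t = (\<Sum>k=1..n. w k * (c1 k * S' k t + c2 k * V' k t + (S k t + \<delta> * V k t))) - \<alpha>"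
    unfolding L'_def G_def by (simp add: sum.distrib[symmetric] algebra_simps)
  also have "\<dots> \<ge> (\<Sum>k=1..n. w k * (c1 k * \<Lambda> k - \<Theta> I t * (lam k * (c1 k + c2 k)))) - \<alpha>"
    using class_contribution_ge[OF _ t] less_imp_le[OF w_pos]
    by (intro diff_right_mono sum_mono mult_left_mono) auto
  moreover have "(\<Sum>k=1..n. w k * (c1 k * \<Lambda> k - \<Theta> I t * (lam k * (c1 k + c2 k)))) - \<alpha>
      = growth - damping * \<Theta> I t"
    using sum_w_c1_Lam unfolding growth_def damping_def
    by (simp add: sum_subtractf sum_distrib_left algebra_simps)
  ultimately show ?thesis by simp
qed

lemma L_grows_while_low:
  assumes s: "0 \<le> s" "s \<le> t" and low: "\<And>v. s < v \<Longrightarrow> v < t \<Longrightarrow> \<Theta> I v \<le> Theta_low"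
  shows "L t \<ge> L s + growth / 2 * (t - s)"
proof -
  have "L s - growth / 2 * s \<le> L t - growth / 2 * t"
  proof (rule halfline_DERIV_nonneg_imp_le[where f = "\<lambda>v. L v - growth / 2 * v"
        and f' = "\<lambda>v. L' v - growth / 2"])
    show "((\<lambda>v. L v - growth / 2 * v) has_real_derivative L' v - growth / 2) (at v within {0..})"
      if "v \<ge> 0" for v
      using L_deriv[OF that] by (auto intro!: derivative_eq_intros)
    show "L' v - growth / 2 \<ge> 0" if "s < v" "v < t" for v
      using L'_ge[of v] mult_left_mono[OF low[OF that] damping_nonneg] damping_Theta_low that s
      by linarith
  qed (use s in auto)
  moreover have "growth / 2 * (t - s) = growth / 2 * t - growth / 2 * s" by (simp add: right_diff_distrib)
  ultimately show ?thesis by linarith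
qed

lemma L_loss_bounded:
  assumes s: "0 \<le> s" "s \<le> t"
  shows "L t \<ge> L s - damping * Theta_one * (t - s)"
proof -
  have "L s + damping * Theta_one * s \<le> L t + damping * Theta_one * t"
  proof (rule halfline_DERIV_nonneg_imp_le[where f = "\<lambda>v. L v + damping * Theta_one * v"
        and f' = "\<lambda>v. L' v + damping * Theta_one"])
    show "((\<lambda>v. L v + damping * Theta_one * v) has_real_derivative L' v + damping * Theta_one)
        (at v within {0..})" if "v \<ge> 0" for v
      using L_deriv[OF that] by (auto intro!: derivative_eq_intros)
    show "L' v + damping * Theta_one \<ge> 0" if "s < v" "v < t" for v
      using L'_ge[of v] mult_left_mono[OF Theta_le_Theta_one[of v] damping_nonneg] growth_pos that s
      by linarith
  qed (use s in auto)
  moreover have "damping * Theta_one * (t - s) = damping * Theta_one * t - damping * Theta_one * s"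
    by (simp add: right_diff_distrib)
  ultimately show ?thesis by linarith
qed

lemma Theta_exceeds_low: "\<exists>s\<ge>0. \<Theta> I s \<ge> Theta_low"
proof (rule ccontr)
  assume "\<not> ?thesis"
  then have low: "\<And>v. v \<ge> 0 \<Longrightarrow> \<Theta> I v \<le> Theta_low" by force
  define t where "t = 2 * (\<bar>ln Theta_low\<bar> + \<bar>L 0\<bar> + P_max) / growth + 1"
  have "t \<ge> 0" unfolding t_def using growth_pos P_max_nonneg by simp
  have "growth / 2 * t > \<bar>ln Theta_low\<bar> + \<bar>L 0\<bar> + P_max"
    unfolding t_def using growth_pos by (simp add: field_simps)
  moreover have "L t \<ge> L 0 + growth / 2 * t"
    using L_grows_while_low[of 0 t] \<open>t \<ge> 0\<close> low by simp
  ultimately have "ln (\<Theta> I t) > ln Theta_low"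
    using ln_Theta_bounds(1)[OF \<open>t \<ge> 0\<close>] by linarith
  moreover have "ln (\<Theta> I t) \<le> ln Theta_low"
    using low[OF \<open>t \<ge> 0\<close>] Theta_pos[OF \<open>t \<ge> 0\<close>] by simp
  ultimately show False by simp
qed

lemma excursion_short:
  assumes s: "0 \<le> s" "\<Theta> I s \<ge> Theta_low" and low: "\<And>v. s < v \<Longrightarrow> v \<le> t \<Longrightarrow> \<Theta> I v < Theta_low"
  shows "t - s < recovery_time"
proof (rule ccontr)
  assume "\<not> t - s < recovery_time"
  define r where "r = s + recovery_time"
  have r: "s \<le> r" "r \<le> t" "r > s" using recovery_time_pos \<open>\<not> t - s < recovery_time\<close> unfolding r_def by auto
  have "L r \<ge> L s + growth / 2 * recovery_time"
    using L_grows_while_low[of s r] low r s by (force simp: r_def less_imp_le)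
  moreover have "growth / 2 * recovery_time = P_max + growth / 2"
    unfolding recovery_time_def using growth_pos by (simp add: field_simps)
  moreover have "ln Theta_low \<le> ln (\<Theta> I s)" using s Theta_low_pos by simp
  ultimately have "ln (\<Theta> I r) > ln Theta_low"
    using ln_Theta_bounds(1)[of r] ln_Theta_bounds(2)[of s] growth_pos r s by linarith
  then have "\<Theta> I r > Theta_low" using Theta_low_pos Theta_pos[of r] r s by simp
  then show False using low[of r] r by simp
qed

lemma Theta_ge_floor:
  assumes s0: "0 \<le> s0" "\<Theta> I s0 \<ge> Theta_low" and t: "s0 \<le> t"
  shows "\<Theta> I t \<ge> Theta_floor"
proof (cases "\<Theta> I t \<ge> Theta_low")
  case True
  then show ?thesis using Theta_floor_le by simp
next
  case False
  have "continuous_on {0..} (\<lambda>t. \<Theta> I t)" by (rule DERIV_continuous_on) (use Theta_deriv in auto)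
  then have "continuous_on {s0..t} (\<lambda>t. \<Theta> I t)" by (rule continuous_on_subset) (use s0 in auto)
  then obtain s where s: "s0 \<le> s" "s \<le> t" "\<Theta> I s \<ge> Theta_low"
    and low: "\<And>v. s < v \<Longrightarrow> v \<le> t \<Longrightarrow> \<Theta> I v < Theta_low"
    using last_time_at_least[of s0 t "\<lambda>t. \<Theta> I t" Theta_low] s0 t by blast
  have "s \<ge> 0" "t \<ge> 0" using s s0 by auto
  have "t - s < recovery_time" using excursion_short[OF \<open>s \<ge> 0\<close> s(3) low] .
  then have "damping * Theta_one * (t - s) \<le> damping * Theta_one * recovery_time"
    using damping_nonneg Theta_one_nonneg by (intro mult_left_mono) auto
  moreover have "ln Theta_low \<le> ln (\<Theta> I s)" using s(3) Theta_low_pos by simp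
  ultimately have "ln (\<Theta> I t) \<ge> ln Theta_low - (damping * Theta_one * recovery_time + P_max)"
    using L_loss_bounded[OF \<open>s \<ge> 0\<close> s(2)] ln_Theta_bounds(1)[OF \<open>t \<ge> 0\<close>]
      ln_Theta_bounds(2)[OF \<open>s \<ge> 0\<close>] by linarith
  then have "exp (ln Theta_low - (damping * Theta_one * recovery_time + P_max)) \<le> exp (ln (\<Theta> I t))"
    by (rule exp_mono)
  moreover have "exp (ln Theta_low - (damping * Theta_one * recovery_time + P_max)) = Theta_floor"
    unfolding Theta_floor_def using Theta_low_pos by (simp add: exp_diff exp_minus exp_add divide_inverse)
  ultimately show ?thesis using Theta_pos[OF \<open>t \<ge> 0\<close>] by simp
qed

lemma prevalence_persistent:
  "ereal prevalence_floor \<le> Liminf at_top (\<lambda>t. ereal (\<Sum>k=1..n. p k * I k t))"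
proof (rule Liminf_bounded)
  obtain s0 where s0: "s0 \<ge> 0" "\<Theta> I s0 \<ge> Theta_low" using Theta_exceeds_low by blast
  have "prevalence_floor \<le> (\<Sum>k=1..n. p k * I k t)" if t: "t \<ge> s0" for t
  proof -
    have "kbar * Theta_floor \<le> kbar * \<Theta> I t"
      using Theta_ge_floor[OF s0 t] kbar_pos by simp
    also have "\<dots> \<le> (\<Sum>k=1..n. phi k) * (\<Sum>k=1..n. p k * I k t)"
      using Theta_le_prevalence compartments_nonneg(3) s0 t by simp
    moreover have "(\<Sum>k=1..n. phi k) > 0" using n phi_pos by (intro sum_pos) auto
    ultimately show ?thesis
      unfolding prevalence_floor_def by (simp add: pos_divide_le_eq mult.commute)
  qed
  then show "\<forall>\<^sub>F t in at_top. ereal prevalence_floor \<le> ereal (\<Sum>k=1..n. p k * I k t)"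
    unfolding eventually_at_top_linorder by auto
qed

end

theorem theorem4p9:
  fixes n :: nat and p lam phi mu :: "nat \<Rightarrow> real"
    and b d Phi \<beta> \<gamma> \<eta> \<omega> \<delta> :: real
  assumes n: "n \<ge> 1"
    and p_pos: "\<forall>k\<in>{1..n}. p k > 0"
    and p_sum: "(\<Sum>k=1..n. p k) = 1"
    and bd: "b > d" "d > 0"
    and Phi_pos: "Phi > 0"
    and Phi_eq: "Phi = (1 / kmean n p) * (\<Sum>i=1..n. real i * p i * b * Phi / (d + b * real i * Phi))"
    and lam_pos: "\<forall>k\<in>{1..n}. lam k > 0"
    and phi_pos: "\<forall>k\<in>{1..n}. phi k > 0"
    and mu_pos: "\<forall>k\<in>{1..n}. mu k > 0"
    and pars: "\<beta> > 0" "\<gamma> > 0" "\<eta> > 0" "\<omega> > 0"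
    and delta: "0 \<le> \<delta>" "\<delta> \<le> 1"
    and R0: "R0 n p b d Phi lam phi mu \<beta> \<gamma> \<omega> \<delta> > 1"
  shows "\<exists>\<epsilon>>0. \<forall>S V I Q.
           SVIQS_solution n p b d Phi lam phi mu \<beta> \<gamma> \<eta> \<omega> \<delta> S V I Q \<and>
           (\<forall>k\<in>{1..n}. S k 0 \<ge> 0 \<and> V k 0 \<ge> 0 \<and> I k 0 \<ge> 0 \<and> Q k 0 \<ge> 0 \<and>
               S k 0 + V k 0 + I k 0 + Q k 0 = Nstar b d Phi k) \<and>
           (\<Sum>k=1..n. p k * I k 0) > 0
           \<longrightarrow> ereal \<epsilon> \<le> Liminf at_top (\<lambda>t. ereal (\<Sum>k=1..n. p k * I k t))"
proof -
  interpret sviqs_endemic n p lam phi mu b d Phi \<beta> \<gamma> \<eta> \<omega> \<delta>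
    by unfold_locales (use n p_pos bd Phi_pos lam_pos phi_pos mu_pos pars delta R0 in auto)
  have "ereal prevalence_floor \<le> Liminf at_top (\<lambda>t. ereal (\<Sum>k=1..n. p k * I k t))"
    if "SVIQS_solution n p b d Phi lam phi mu \<beta> \<gamma> \<eta> \<omega> \<delta> S V I Q \<and>
        (\<forall>k\<in>{1..n}. S k 0 \<ge> 0 \<and> V k 0 \<ge> 0 \<and> I k 0 \<ge> 0 \<and> Q k 0 \<ge> 0 \<and>
            S k 0 + V k 0 + I k 0 + Q k 0 = Nstar b d Phi k) \<and>
        (\<Sum>k=1..n. p k * I k 0) > 0" for S V I Q
  proof -
    interpret sviqs_endemic_solution n p lam phi mu b d Phi \<beta> \<gamma> \<eta> \<omega> \<delta> S V I Q
      by unfold_locales (use that in auto)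
    show ?thesis by (rule prevalence_persistent)
  qed
  then show ?thesis using prevalence_floor_pos by blast
qed

end
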